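(* Let $n\ge 4$ and $2\le t\le n-2$, and suppose that the covariance matrix $\Sigma(t)=\mathsf{var}(\vec a(t))$ is invertible and that $\mathsf{var}(W_1(t))\ne \mathsf{cov}(W_1(t),W_2(t))$ and $\mathsf{var}(D_1(t))\ne\mathsf{cov}(D_1(t),D_2(t))$. Define \[ c_1(t)=\frac{\mathsf{var}(W_2(t))-\mathsf{cov}(W_1(t),W_2(t))}{\mathsf{var}(W_1(t))-\mathsf{cov}(W_1(t),W_2(t))},\qquad c_2(t)=\frac{\mathsf{var}(D_2(t))-\mathsf{cov}(D_1(t),D_2(t))}{\mathsf{var}(D_1(t))-\mathsf{cov}(D_1(t),D_2(t))}, \] and \[ W_{\mathrm{Diff}}(t)=W_1(t)-W_2(t),\quad D_{\mathrm{Diff}}(t)=D_1(t)-D_2(t),\quad W_{\mathrm{Sum}}(t)=c_1(t)W_1(t)+W_2(t),\quad D_{\mathrm{Sum}}(t)=c_2(t)D_1(t)+D_2(t). \] Then these four quantities have positive variance, their standardized versions $Z_{W_{\mathrm{Diff}}}(t),Z_{D_{\mathrm{Diff}}}(t),Z_{W_{\mathrm{Sum}}}(t),Z_{D_{\mathrm{Sum}}}(t)$ are pairwise uncorrelated under the permutation null, and \[ S(t)=Z_{W_{\mathrm{Diff}}}(t)^2+Z_{D_{\mathrm{Diff}}}(t)^2+Z_{W_{\mathrm{Sum}}}(t)^2+Z_{D_{\mathrm{Sum}}}(t)^2 . \]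
   Context: Let $G_1,\dots,G_n$ be a sequence of observations (networks) and let $K_1,K_2$ be two real symmetric $n\times n$ kernel matrices computed from this sequence, with $(i,j)$ entry $k_{xij}$ of $K_x$, $x\in\{1,2\}$. The permutation null distribution assigns probability $1/n!$ to each of the $n!$ permutations of the sequence, i.e. the kernel matrices $K_x$ are replaced by $(k_{x\pi(i)\pi(j)})_{i,j}$ for a uniformly random permutation $\pi$ of $\{1,\dots,n\}$ (the same $\pi$ for both kernels); $\mathsf{E},\mathsf{var},\mathsf{cov}$ denote expectation, variance and covariance under this distribution. For a quantity $T$, its standardized version is $Z_T=(T-\mathsf{E}T)/\sqrt{\mathsf{var}(T)}$. For $x\in\{1,2\}$ define \[ \alpha_x(t)=\frac{1}{t(t-1)}\sum_{i=1}^n\sum_{j\ne i}k_{xij}\mathbb{1}\{i,j\le t\},\qquad \beta_x(t)=\frac{1}{(n-t)(n-t-1)}\sum_{i=1}^n\sum_{j\ne i}k_{xij}\mathbb{1}\{i,j> t\}, \] \[ W_x(t)=\frac{t}{n}\alpha_x(t)+\frac{n-t}{n}\beta_x(t),\qquad D_x(t)=\frac{t(t-1)}{n(n-1)}\alpha_x(t)-\frac{(n-t)(n-t-1)}{n(n-1)}\beta_x(t). \] Let $\vec a(t)=[\alpha_1(t),\beta_1(t),\alpha_2(t),\beta_2(t)]^{\mathsf T}$, $\Sigma(t)=\mathsf{var}(\vec a(t))$ (the $4\times4$ covariance matrix under the permutation null), and \[ S(t)=[\vec a(t)-\mathsf{E}\vec a(t)]^{\mathsf T}\Sigma(t)^{-1}[\vec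 a(t)-\mathsf{E}\vec a(t)]. \] *)

theory Defs
  imports "HOL-Analysis.Analysis" "HOL-Combinatorics.Permutations"
begin

text \<open>Observations are indexed by 1..n; a kernel matrix is a function nat => nat => real,
  only its values on 1..n matter. A statistic under the permutation null is a
  function of the permutation p (p permutes 1..n); the permuted kernel entry (i,j) is
  K (p i) (p j). The identity permutation gives the observed statistic.\<close>

type_synonym perm_stat = "(nat \<Rightarrow> nat) \<Rightarrow> real"

definition pexp :: "nat \<Rightarrow> perm_stat \<Rightarrow> real" where
  "pexp n X = (\<Sum>p\<in>{p. p permutes {1..n}}. X p) / fact n"

definition pcov :: "nat \<Rightarrow> perm_stat \<Rightarrow> perm_stat \<Rightarrow> real" where
  "pcov n X Y = pexp n (\<lambda>p. (X p - pexp n X) * (Y p - pexp n Y))"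

definition pvar :: "nat \<Rightarrow> perm_stat \<Rightarrow> real" where
  "pvar n X = pcov n X X"

definition zstd :: "nat \<Rightarrow> perm_stat \<Rightarrow> perm_stat" where
  "zstd n X = (\<lambda>p. (X p - pexp n X) / sqrt (pvar n X))"

definition alpha :: "nat \<Rightarrow> (nat \<Rightarrow> nat \<Rightarrow> real) \<Rightarrow> nat \<Rightarrow> perm_stat" where
  "alpha n K t = (\<lambda>p. 1 / (real t * (real t - 1)) *
     (\<Sum>i\<in>{1..n}. \<Sum>j\<in>{1..n} - {i}. if i \<le> t \<and> j \<le> t then K (p i) (p j) else 0))"

definition beta :: "nat \<Rightarrow> (nat \<Rightarrow> nat \<Rightarrow> real) \<Rightarrow> nat \<Rightarrow> perm_stat" where
  "beta n K t = (\<lambda>p. 1 / ((real n - real t) * (real n - real t - 1)) *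
     (\<Sum>i\<in>{1..n}. \<Sum>j\<in>{1..n} - {i}. if i > t \<and> j > t then K (p i) (p j) else 0))"

definition Wstat :: "nat \<Rightarrow> (nat \<Rightarrow> nat \<Rightarrow> real) \<Rightarrow> nat \<Rightarrow> perm_stat" where
  "Wstat n K t = (\<lambda>p. real t / real n * alpha n K t p
                      + (real n - real t) / real n * beta n K t p)"

definition Dstat :: "nat \<Rightarrow> (nat \<Rightarrow> nat \<Rightarrow> real) \<Rightarrow> nat \<Rightarrow> perm_stat" where
  "Dstat n K t = (\<lambda>p. real t * (real t - 1) / (real n * (real n - 1)) * alpha n K t p
      - (real n - real t) * (real n - real t - 1) / (real n * (real n - 1)) * beta n K t p)"

definition avec :: "nat \<Rightarrow> (nat \<Rightarrow> nat \<Rightarrow> real) \<Rightarrow> (nat \<Rightarrow> nat \<Rightarrow> real) \<Rightarrow> nat \<Rightarrow> 4 \<Rightarrow> perm_stat" where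
  "avec n K1 K2 t i = (if i = 0 then alpha n K1 t else if i = 1 then beta n K1 t
                       else if i = 2 then alpha n K2 t else beta n K2 t)"

definition Sigma_mat :: "nat \<Rightarrow> (nat \<Rightarrow> nat \<Rightarrow> real) \<Rightarrow> (nat \<Rightarrow> nat \<Rightarrow> real) \<Rightarrow> nat \<Rightarrow> real^4^4" where
  "Sigma_mat n K1 K2 t = (\<chi> i j. pcov n (avec n K1 K2 t i) (avec n K1 K2 t j))"

definition Sstat :: "nat \<Rightarrow> (nat \<Rightarrow> nat \<Rightarrow> real) \<Rightarrow> (nat \<Rightarrow> nat \<Rightarrow> real) \<Rightarrow> nat \<Rightarrow> perm_stat" where
  "Sstat n K1 K2 t = (\<lambda>p. let v = (\<chi> i. avec n K1 K2 t i p - pexp n (avec n K1 K2 t i))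
      in v \<bullet> (matrix_inv (Sigma_mat n K1 K2 t) *v v))"

end

theory Submission
  imports Defs
begin

text \<open>Under the permutation null the positions (p i, p j, p m) are exchangeable, so
  Cov(K(p i, p j), phi(p m)) takes only three values g1, g2, g3, according to whether m = i, m = j
  or m is a third position; as the sum of phi(p m) over all m is constant,
  g1 + g2 + (n - 2) g3 = 0. Up to a constant, D_L(t) is the sum over the first segment of
  phi(p m), where phi(a) is the row plus column sum of L at a. Hence Cov(alpha_K, D_L) and
  Cov(beta_K, D_L) are proportional to (t - n) g3 and t g3, and the weights t/n and (n - t)/n of W
  cancel them: every W is uncorrelated with every D. The constants c1, c2 decorrelate the
  difference and the weighted sum within each pair, so the four statistics are pairwise
  uncorrelated nontrivial combinations C a. Then C Sigma C^T is diagonal,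
  Sigma^-1 = C^T diag(1 / var) C, and S(t) splits into the four squared standardized statistics.\<close>

section \<open>Moments under the permutation null\<close>

lemma pexp_add: "pexp n (\<lambda>p. X p + Y p) = pexp n X + pexp n Y"
  unfolding pexp_def by (simp add: sum.distrib add_divide_distrib)

lemma pexp_diff: "pexp n (\<lambda>p. X p - Y p) = pexp n X - pexp n Y"
  unfolding pexp_def by (simp add: sum_subtractf diff_divide_distrib)

lemma pexp_cmult: "pexp n (\<lambda>p. c * X p) = c * pexp n X"
  unfolding pexp_def by (simp add: sum_distrib_left)

lemma pexp_const: "pexp n (\<lambda>p. c) = c"
  unfolding pexp_def by (simp add: card_permutations)

lemma pexp_sum: "pexp n (\<lambda>p. \<Sum>k\<in>I. X k p) = (\<Sum>k\<in>I. pexp n (X k))"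
  unfolding pexp_def by (simp add: sum.swap[of _ I] sum_divide_distrib)

lemma pexp_cong: "(\<And>p. p permutes {1..n} \<Longrightarrow> X p = Y p) \<Longrightarrow> pexp n X = pexp n Y"
  unfolding pexp_def by (metis (mono_tags, lifting) mem_Collect_eq sum.cong)

lemma pcov_altdef: "pcov n X Y = pexp n (\<lambda>p. X p * Y p) - pexp n X * pexp n Y"
proof -
  have "pcov n X Y = pexp n (\<lambda>p. X p * Y p - pexp n Y * X p - (pexp n X * Y p - pexp n X * pexp n Y))"
    unfolding pcov_def by (simp add: algebra_simps)
  then show ?thesis
    by (simp add: pexp_diff pexp_cmult pexp_const)
qed

lemma pcov_commute: "pcov n X Y = pcov n Y X"
  unfolding pcov_altdef by (simp add: mult.commute)

lemma pcov_cong: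
  "(\<And>p. p permutes {1..n} \<Longrightarrow> X p = X' p) \<Longrightarrow> (\<And>p. p permutes {1..n} \<Longrightarrow> Y p = Y' p)
   \<Longrightarrow> pcov n X Y = pcov n X' Y'"
  unfolding pcov_altdef by (metis (no_types, lifting) pexp_cong)

lemma pcov_add_left: "pcov n (\<lambda>p. X p + Y p) Z = pcov n X Z + pcov n Y Z"
  unfolding pcov_altdef by (simp add: distrib_right pexp_add algebra_simps)

lemma pcov_diff_left: "pcov n (\<lambda>p. X p - Y p) Z = pcov n X Z - pcov n Y Z"
  unfolding pcov_altdef by (simp add: left_diff_distrib pexp_diff algebra_simps)

lemma pcov_cmult_left: "pcov n (\<lambda>p. c * X p) Z = c * pcov n X Z"
  unfolding pcov_altdef by (simp add: pexp_cmult algebra_simps)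

lemma pcov_divide_left: "pcov n (\<lambda>p. X p / c) Z = pcov n X Z / c"
  using pcov_cmult_left[of n "1 / c" X Z] by simp

lemma pcov_const_left: "pcov n (\<lambda>p. c) Z = 0"
  unfolding pcov_altdef by (simp add: pexp_cmult pexp_const)

lemma pcov_sum_left: "pcov n (\<lambda>p. \<Sum>k\<in>I. X k p) Z = (\<Sum>k\<in>I. pcov n (X k) Z)"
  unfolding pcov_altdef by (simp add: sum_distrib_right pexp_sum sum_subtractf)

lemma pcov_add_right: "pcov n Z (\<lambda>p. X p + Y p) = pcov n Z X + pcov n Z Y"
  unfolding pcov_commute[of n Z] by (rule pcov_add_left)

lemma pcov_diff_right: "pcov n Z (\<lambda>p. X p - Y p) = pcov n Z X - pcov n Z Y"
  unfolding pcov_commute[of n Z] by (rule pcov_diff_left)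

lemma pcov_cmult_right: "pcov n Z (\<lambda>p. c * X p) = c * pcov n Z X"
  unfolding pcov_commute[of n Z] by (rule pcov_cmult_left)

lemma pcov_const_right: "pcov n Z (\<lambda>p. c) = 0"
  unfolding pcov_commute[of n Z] by (rule pcov_const_left)

lemma pcov_sum_right: "pcov n Z (\<lambda>p. \<Sum>k\<in>I. X k p) = (\<Sum>k\<in>I. pcov n Z (X k))"
  unfolding pcov_commute[of n Z] by (rule pcov_sum_left)

lemmas pcov_linear =
  pcov_add_left pcov_diff_left pcov_cmult_left pcov_divide_left pcov_const_left pcov_sum_left
  pcov_add_right pcov_diff_right pcov_cmult_right pcov_const_right pcov_sum_right

lemma pvar_nonneg: "pvar n X \<ge> 0"
  unfolding pvar_def pcov_def pexp_def by (auto intro!: divide_nonneg_pos sum_nonneg)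

lemma pvar_eq_0_imp_const:
  assumes "pvar n X = 0" "p permutes {1..n}"
  shows "X p = pexp n X"
proof -
  have "(\<Sum>q\<in>{q. q permutes {1..n}}. (X q - pexp n X)\<^sup>2) = 0"
    using assms(1) unfolding pvar_def pcov_def pexp_def by (simp add: power2_eq_square)
  then have "\<forall>q\<in>{q. q permutes {1..n}}. (X q - pexp n X)\<^sup>2 = 0"
    by (simp add: sum_nonneg_eq_0_iff finite_permutations)
  then show ?thesis using assms(2) by simp
qed

lemma pcov_eq_0_if_pvar_eq_0: "pvar n X = 0 \<Longrightarrow> pcov n X Y = 0"
  using pcov_cong[of n X "\<lambda>p. pexp n X" Y Y] pvar_eq_0_imp_const pcov_const_left by metis

lemma pcov_zstd: "pcov n (zstd n X) (zstd n Y) = pcov n X Y / (sqrt (pvar n X) * sqrt (pvar n Y))"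
proof -
  have "zstd n X = (\<lambda>p. (1 / sqrt (pvar n X)) * X p - pexp n X / sqrt (pvar n X))" for X
    unfolding zstd_def by (auto simp: diff_divide_distrib)
  then show ?thesis
    by (simp only: pcov_diff_left pcov_diff_right pcov_cmult_left pcov_cmult_right
        pcov_const_left pcov_const_right) simp
qed

section \<open>Exchangeability\<close>

lemma sum_permutes_apply: "p permutes S \<Longrightarrow> (\<Sum>i\<in>S. f (p i)) = (\<Sum>a\<in>S. f a)"
  using sum.permute[of p S f] by (simp add: comp_def)

lemma permutes_map_exists:
  assumes "distinct xs" "distinct ys" "length xs = length ys" "set xs \<subseteq> S" "set ys \<subseteq> S"
  shows "\<exists>\<sigma>. \<sigma> permutes S \<and> map \<sigma> xs = ys"
  using assms
proof (induction xs arbitrary: ys)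
  case Nil
  then show ?case by (auto intro: permutes_id)
next
  case (Cons x xs)
  then obtain y ys' where ys: "ys = y # ys'" by (cases ys) auto
  with Cons obtain \<sigma>0 where \<sigma>0: "\<sigma>0 permutes S" "map \<sigma>0 xs = ys'" by auto
  define \<sigma> where "\<sigma> = Transposition.transpose (\<sigma>0 x) y \<circ> \<sigma>0"
  have "\<sigma> permutes S"
    unfolding \<sigma>_def using Cons.prems ys permutes_in_image[OF \<sigma>0(1)]
    by (intro permutes_compose[OF \<sigma>0(1)] permutes_swap_id) auto
  moreover have "\<sigma> u = \<sigma>0 u" if "u \<in> set xs" for u
  proof -
    have "\<sigma>0 u \<noteq> y" using that \<sigma>0(2) Cons.prems ys by auto
    moreover have "\<sigma>0 u \<noteq> \<sigma>0 x"
      using that Cons.prems permutes_inj[OF \<sigma>0(1)] by (auto dest: injD)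
    ultimately show ?thesis unfolding \<sigma>_def by (simp add: transpose_apply_other)
  qed
  then have "map \<sigma> xs = ys'" using \<sigma>0(2) by (metis map_eq_conv)
  ultimately show ?case using ys by (auto simp: \<sigma>_def)
qed

lemma pexp_map_permutes_invariant:
  assumes "distinct xs" "distinct ys" "length xs = length ys" "set xs \<subseteq> {1..n}" "set ys \<subseteq> {1..n}"
  shows "pexp n (\<lambda>p. F (map p xs)) = pexp n (\<lambda>p. F (map p ys))"
proof -
  obtain \<sigma> where \<sigma>: "\<sigma> permutes {1..n}" "map \<sigma> ys = xs"
    using permutes_map_exists[of ys xs] assms by auto
  have "(\<Sum>p\<in>{p. p permutes {1..n}}. F (map p ys)) = (\<Sum>p\<in>{p. p permutes {1..n}}. F (map (p \<circ> \<sigma>) ys))"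
    by (rule sum_permutations_compose_right[OF \<sigma>(1)])
  also have "\<dots> = (\<Sum>p\<in>{p. p permutes {1..n}}. F (map p xs))"
    using \<sigma>(2) by (simp flip: map_map)
  finally show ?thesis unfolding pexp_def by simp
qed

lemma pcov_map_permutes_invariant:
  assumes "distinct xs" "distinct ys" "length xs = length ys" "set xs \<subseteq> {1..n}" "set ys \<subseteq> {1..n}"
  shows "pcov n (\<lambda>p. F (map p xs)) (\<lambda>p. G (map p xs)) = pcov n (\<lambda>p. F (map p ys)) (\<lambda>p. G (map p ys))"
  unfolding pcov_altdef
  using pexp_map_permutes_invariant[OF assms, of F] pexp_map_permutes_invariant[OF assms, of G]
    pexp_map_permutes_invariant[OF assms, of "\<lambda>l. F l * G l"] by simp

definition offdiag_sum :: "'a set \<Rightarrow> ('a \<Rightarrow> 'a \<Rightarrow> real) \<Rightarrow> real" where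
  "offdiag_sum T Q = (\<Sum>i\<in>T. \<Sum>j\<in>T - {i}. Q i j)"

lemma offdiag_sum_eq: "finite T \<Longrightarrow> offdiag_sum T Q = (\<Sum>i\<in>T. \<Sum>j\<in>T. Q i j) - (\<Sum>i\<in>T. Q i i)"
  unfolding offdiag_sum_def by (simp add: sum_diff1 sum_subtractf)

lemma offdiag_sum_const: "finite T \<Longrightarrow> offdiag_sum T (\<lambda>i j. c) = real (card T) * (real (card T) - 1) * c"
  unfolding offdiag_sum_eq by (simp add: algebra_simps)

lemma offdiag_sum_restrict:
  assumes "finite S"
  shows "(\<Sum>i\<in>S. \<Sum>j\<in>S - {i}. if P i \<and> P j then Q i j else 0) = offdiag_sum {x\<in>S. P x} Q"
proof -
  have "(\<Sum>j\<in>S - {i}. if P i \<and> P j then Q i j else 0)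
      = (if P i then \<Sum>j\<in>{x\<in>S. P x} - {i}. Q i j else 0)" for i
    using assms by (simp add: sum.inter_filter[symmetric] set_diff_eq conj_ac)
  then show ?thesis
    using assms by (simp add: offdiag_sum_def sum.inter_filter)
qed

lemma offdiag_sum_permutes:
  assumes "p permutes S" "finite S"
  shows "offdiag_sum S (\<lambda>i j. Q (p i) (p j)) = offdiag_sum S Q"
proof -
  note reindex = sum_permutes_apply[OF assms(1)]
  have "(\<Sum>i\<in>S. \<Sum>j\<in>S. Q (p i) (p j)) = (\<Sum>a\<in>S. \<Sum>j\<in>S. Q a (p j))"
    by (rule reindex)
  also have "\<dots> = (\<Sum>a\<in>S. \<Sum>b\<in>S. Q a b)"
    by (intro sum.cong refl reindex)
  finally show ?thesis
    using assms(2) reindex[of "\<lambda>a. Q a a"] by (simp add: offdiag_sum_eq)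
qed

lemma offdiag_sum_split:
  fixes Q :: "'a \<Rightarrow> 'a \<Rightarrow> real"
  assumes "finite S" "T \<subseteq> S"
  shows "offdiag_sum T Q - offdiag_sum (S - T) Q
       = (\<Sum>m\<in>T. \<Sum>j\<in>S - {m}. Q m j + Q j m) - offdiag_sum S Q"
proof -
  have fin: "finite T" "finite (S - T)" using assms finite_subset by auto
  have split: "(\<Sum>i\<in>S. f i) = (\<Sum>i\<in>T. f i) + (\<Sum>i\<in>S - T. f i)" for f :: "'a \<Rightarrow> real"
    using sum.subset_diff[OF assms(2,1)] by (simp add: add.commute)
  have row: "(\<Sum>j\<in>S - {m}. Q m j + Q j m) = (\<Sum>j\<in>S. Q m j) + (\<Sum>j\<in>S. Q j m) - 2 * Q m m"
    if "m \<in> S" for m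
    using assms(1) that by (simp add: sum_diff1 sum.distrib)
  have "(\<Sum>m\<in>T. \<Sum>j\<in>S - {m}. Q m j + Q j m)
      = (\<Sum>m\<in>T. (\<Sum>j\<in>S. Q m j) + (\<Sum>j\<in>S. Q j m) - 2 * Q m m)"
    using assms(2) by (intro sum.cong refl row) auto
  then have rows: "(\<Sum>m\<in>T. \<Sum>j\<in>S - {m}. Q m j + Q j m)
      = (\<Sum>m\<in>T. \<Sum>j\<in>S. Q m j) + (\<Sum>j\<in>S. \<Sum>m\<in>T. Q j m) - 2 * (\<Sum>m\<in>T. Q m m)"
    by (simp add: sum.distrib sum_subtractf sum_distrib_left sum.swap[of _ T])
  show ?thesis
    unfolding rows offdiag_sum_eq[OF fin(1)] offdiag_sum_eq[OF fin(2)] offdiag_sum_eq[OF assms(1)]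
    by (simp add: split sum.distrib sum.swap[of _ T "S - T"])
qed

section \<open>Every W statistic is uncorrelated with every D statistic\<close>

lemma alpha_eq_offdiag_sum:
  "t \<le> n \<Longrightarrow> alpha n K t = (\<lambda>p. offdiag_sum {1..t} (\<lambda>i j. K (p i) (p j)) / (real t * (real t - 1)))"
proof -
  assume "t \<le> n"
  then have "{x \<in> {1..n}. x \<le> t} = {1..t}" by auto
  then show ?thesis
    unfolding alpha_def using offdiag_sum_restrict[of "{1..n}" "\<lambda>x. x \<le> t"] by (auto simp: fun_eq_iff)
qed

lemma beta_eq_offdiag_sum:
  "beta n K t = (\<lambda>p. offdiag_sum {t<..n} (\<lambda>i j. K (p i) (p j)) / ((real n - real t) * (real n - real t - 1)))"
proof -
  have "{x \<in> {1..n}. t < x} = {t<..n}" by auto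
  then show ?thesis
    unfolding beta_def using offdiag_sum_restrict[of "{1..n}" "\<lambda>x. t < x"] by (auto simp: fun_eq_iff)
qed

definition kernel_degree :: "nat \<Rightarrow> (nat \<Rightarrow> nat \<Rightarrow> real) \<Rightarrow> nat \<Rightarrow> real" where
  "kernel_degree n L a = (\<Sum>b\<in>{1..n} - {a}. L a b + L b a)"

lemma sum_permutes_remove:
  assumes "p permutes S" "m \<in> S"
  shows "(\<Sum>j\<in>S - {m}. g (p j)) = (\<Sum>b\<in>S - {p m}. g b)"
proof -
  have "p ` (S - {m}) = S - {p m}"
    using permutes_image[OF assms(1)] permutes_inj[OF assms(1)] by (simp add: image_set_diff)
  then show ?thesis
    using sum.reindex[of p "S - {m}" g] permutes_inj[OF assms(1)] by (simp add: inj_on_subset)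
qed

lemma Dstat_eq_degree_sum:
  assumes "2 \<le> t" "t + 2 \<le> n" "p permutes {1..n}"
  shows "Dstat n L t p
    = ((\<Sum>m\<in>{1..t}. kernel_degree n L (p m)) - offdiag_sum {1..n} L) / (real n * (real n - 1))"
proof -
  let ?Lp = "\<lambda>i j. L (p i) (p j)"
  have "Dstat n L t p = (offdiag_sum {1..t} ?Lp - offdiag_sum ({1..n} - {1..t}) ?Lp) / (real n * (real n - 1))"
  proof -
    have "{t<..n} = {1..n} - {1..t}" by auto
    moreover have "t \<le> n" "real t * (real t - 1) \<noteq> 0" "(real n - real t) * (real n - real t - 1) \<noteq> 0"
      using assms by auto
    ultimately show ?thesis
      by (simp add: Dstat_def alpha_eq_offdiag_sum beta_eq_offdiag_sum diff_divide_distrib)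
  qed
  also have "offdiag_sum {1..t} ?Lp - offdiag_sum ({1..n} - {1..t}) ?Lp
      = (\<Sum>m\<in>{1..t}. \<Sum>j\<in>{1..n} - {m}. ?Lp m j + ?Lp j m) - offdiag_sum {1..n} ?Lp"
    using assms by (intro offdiag_sum_split) auto
  also have "(\<Sum>m\<in>{1..t}. \<Sum>j\<in>{1..n} - {m}. ?Lp m j + ?Lp j m) = (\<Sum>m\<in>{1..t}. kernel_degree n L (p m))"
    unfolding kernel_degree_def using assms
    by (intro sum.cong refl sum_permutes_remove[where g = "\<lambda>b. L (p _) b + L b (p _)"]) auto
  also have "offdiag_sum {1..n} ?Lp = offdiag_sum {1..n} L"
    using assms(3) by (simp add: offdiag_sum_permutes)
  finally show ?thesis .
qed

lemma pcov_kernel_point_canonical: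
  assumes "3 \<le> n" "i \<in> {1..n}" "j \<in> {1..n}" "m \<in> {1..n}" "i \<noteq> j"
  shows "pcov n (\<lambda>p. K (p i) (p j)) (\<lambda>p. \<phi> (p m))
    = pcov n (\<lambda>p. K (p 1) (p 2)) (\<lambda>p. \<phi> (p (if m = i then 1 else if m = j then 2 else 3)))"
proof -
  have "pcov n (\<lambda>p. K (p i) (p j)) (\<lambda>p. \<phi> (p i)) = pcov n (\<lambda>p. K (p 1) (p 2)) (\<lambda>p. \<phi> (p 1))"
    using pcov_map_permutes_invariant[of "[i, j]" "[1, 2]" n "\<lambda>l. K (l!0) (l!1)" "\<lambda>l. \<phi> (l!0)"] assms
    by simp
  moreover have "pcov n (\<lambda>p. K (p i) (p j)) (\<lambda>p. \<phi> (p j)) = pcov n (\<lambda>p. K (p 1) (p 2)) (\<lambda>p. \<phi> (p 2))"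
    using pcov_map_permutes_invariant[of "[i, j]" "[1, 2]" n "\<lambda>l. K (l!0) (l!1)" "\<lambda>l. \<phi> (l!1)"] assms
    by simp
  moreover have "pcov n (\<lambda>p. K (p i) (p j)) (\<lambda>p. \<phi> (p m)) = pcov n (\<lambda>p. K (p 1) (p 2)) (\<lambda>p. \<phi> (p 3))"
    if "m \<noteq> i" "m \<noteq> j"
    using pcov_map_permutes_invariant[of "[i, j, m]" "[1, 2, 3]" n "\<lambda>l. K (l!0) (l!1)" "\<lambda>l. \<phi> (l!2)"]
      assms that by simp
  ultimately show ?thesis by auto
qed

lemma sum_pcov_kernel_point:
  fixes K :: "nat \<Rightarrow> nat \<Rightarrow> real" and \<phi> :: "nat \<Rightarrow> real"
  assumes "3 \<le> n" "i \<in> {1..n}" "j \<in> {1..n}" "i \<noteq> j" "T \<subseteq> {1..n}"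
  defines "\<gamma> k \<equiv> pcov n (\<lambda>p. K (p 1) (p 2)) (\<lambda>p. \<phi> (p k))"
  shows "(\<Sum>m\<in>T. pcov n (\<lambda>p. K (p i) (p j)) (\<lambda>p. \<phi> (p m)))
    = real (card T) * \<gamma> 3 + (if i \<in> T then \<gamma> 1 - \<gamma> 3 else 0) + (if j \<in> T then \<gamma> 2 - \<gamma> 3 else 0)"
proof -
  have "(\<Sum>m\<in>T. pcov n (\<lambda>p. K (p i) (p j)) (\<lambda>p. \<phi> (p m)))
      = (\<Sum>m\<in>T. \<gamma> 3 + (if m = i then \<gamma> 1 - \<gamma> 3 else 0) + (if m = j then \<gamma> 2 - \<gamma> 3 else 0))"
  proof (rule sum.cong[OF refl])
    fix m assume "m \<in> T"
    then show "pcov n (\<lambda>p. K (p i) (p j)) (\<lambda>p. \<phi> (p m))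
        = \<gamma> 3 + (if m = i then \<gamma> 1 - \<gamma> 3 else 0) + (if m = j then \<gamma> 2 - \<gamma> 3 else 0)"
      unfolding \<gamma>_def using pcov_kernel_point_canonical[of n i j m K \<phi>] assms by auto
  qed
  then show ?thesis
    using finite_subset[OF assms(5)] by (simp add: sum.distrib)
qed

lemma pcov_kernel_point_total:
  fixes K :: "nat \<Rightarrow> nat \<Rightarrow> real" and \<phi> :: "nat \<Rightarrow> real"
  assumes "3 \<le> n"
  defines "\<gamma> k \<equiv> pcov n (\<lambda>p. K (p 1) (p 2)) (\<lambda>p. \<phi> (p k))"
  shows "\<gamma> 1 + \<gamma> 2 = (2 - real n) * \<gamma> 3"
proof -
  have "(\<Sum>m\<in>{1..n}. pcov n (\<lambda>p. K (p 1) (p 2)) (\<lambda>p. \<phi> (p m)))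
      = pcov n (\<lambda>p. K (p 1) (p 2)) (\<lambda>p. \<Sum>m\<in>{1..n}. \<phi> (p m))"
    by (simp add: pcov_sum_right)
  also have "\<dots> = pcov n (\<lambda>p. K (p 1) (p 2)) (\<lambda>p. \<Sum>a\<in>{1..n}. \<phi> a)"
    by (intro pcov_cong refl) (simp add: sum_permutes_apply)
  also have "\<dots> = 0"
    by (rule pcov_const_right)
  finally show ?thesis
    using sum_pcov_kernel_point[of n 1 2 "{1..n}" K \<phi>] assms by (simp add: algebra_simps)
qed

lemma pcov_offdiag_sum_sum:
  "pcov n (\<lambda>p. offdiag_sum S (\<lambda>i j. K (p i) (p j))) (\<lambda>p. \<Sum>m\<in>T. \<phi> (p m))
    = offdiag_sum S (\<lambda>i j. \<Sum>m\<in>T. pcov n (\<lambda>p. K (p i) (p j)) (\<lambda>p. \<phi> (p m)))"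
  by (simp add: offdiag_sum_def pcov_sum_left pcov_sum_right)

lemma pcov_alpha_degree_sum:
  fixes K :: "nat \<Rightarrow> nat \<Rightarrow> real" and \<phi> :: "nat \<Rightarrow> real"
  assumes "2 \<le> t" "t < n"
  shows "pcov n (alpha n K t) (\<lambda>p. \<Sum>m\<in>{1..t}. \<phi> (p m))
    = (real t - real n) * pcov n (\<lambda>p. K (p 1) (p 2)) (\<lambda>p. \<phi> (p 3))"
proof -
  let ?\<gamma> = "pcov n (\<lambda>p. K (p 1) (p 2)) (\<lambda>p. \<phi> (p 3))"
  have "pcov n (\<lambda>p. offdiag_sum {1..t} (\<lambda>i j. K (p i) (p j))) (\<lambda>p. \<Sum>m\<in>{1..t}. \<phi> (p m))
      = offdiag_sum {1..t} (\<lambda>i j. (real t - real n) * ?\<gamma>)"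
    unfolding pcov_offdiag_sum_sum unfolding offdiag_sum_def
    using assms sum_pcov_kernel_point[of n _ _ "{1..t}" K \<phi>] pcov_kernel_point_total[of n K \<phi>]
    by (intro sum.cong refl) (auto simp: algebra_simps)
  then show ?thesis
    using assms by (simp add: alpha_eq_offdiag_sum pcov_divide_left offdiag_sum_const)
qed

lemma pcov_beta_degree_sum:
  fixes K :: "nat \<Rightarrow> nat \<Rightarrow> real" and \<phi> :: "nat \<Rightarrow> real"
  assumes "2 \<le> t" "t + 2 \<le> n"
  shows "pcov n (beta n K t) (\<lambda>p. \<Sum>m\<in>{1..t}. \<phi> (p m))
    = real t * pcov n (\<lambda>p. K (p 1) (p 2)) (\<lambda>p. \<phi> (p 3))"
proof -
  let ?\<gamma> = "pcov n (\<lambda>p. K (p 1) (p 2)) (\<lambda>p. \<phi> (p 3))"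
  have "pcov n (\<lambda>p. offdiag_sum {t<..n} (\<lambda>i j. K (p i) (p j))) (\<lambda>p. \<Sum>m\<in>{1..t}. \<phi> (p m))
      = offdiag_sum {t<..n} (\<lambda>i j. real t * ?\<gamma>)"
    unfolding pcov_offdiag_sum_sum unfolding offdiag_sum_def
    using assms sum_pcov_kernel_point[of n _ _ "{1..t}" K \<phi>]
    by (intro sum.cong refl) auto
  moreover have "(real n - real t) * (real n - real t - 1) \<noteq> 0"
    using assms by auto
  ultimately show ?thesis
    using assms by (simp add: beta_eq_offdiag_sum pcov_divide_left offdiag_sum_const)
qed

lemma pcov_Wstat_Dstat_eq_0:
  assumes "2 \<le> t" "t + 2 \<le> n"
  shows "pcov n (Wstat n K t) (Dstat n L t) = 0"
proof -
  let ?Y = "\<lambda>p. \<Sum>m\<in>{1..t}. kernel_degree n L (p m)"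
  let ?\<gamma> = "pcov n (\<lambda>p. K (p 1) (p 2)) (\<lambda>p. kernel_degree n L (p 3))"
  have "pcov n (Wstat n K t) (Dstat n L t)
      = pcov n (Wstat n K t) (\<lambda>p. ?Y p / (real n * (real n - 1)) - offdiag_sum {1..n} L / (real n * (real n - 1)))"
    using assms by (intro pcov_cong refl) (simp add: Dstat_eq_degree_sum diff_divide_distrib)
  also have "\<dots> = pcov n (Wstat n K t) ?Y / (real n * (real n - 1))"
    by (simp add: pcov_commute[of n "Wstat n K t"] pcov_diff_left pcov_divide_left pcov_const_left)
  also have "pcov n (Wstat n K t) ?Y
      = real t / real n * ((real t - real n) * ?\<gamma>) + (real n - real t) / real n * (real t * ?\<gamma>)"
    unfolding Wstat_def pcov_add_left pcov_cmult_left
    using assms pcov_alpha_degree_sum[of t n K "kernel_degree n L"]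
      pcov_beta_degree_sum[of t n K "kernel_degree n L"] by simp
  also have "\<dots> = 0"
    by (simp add: add_divide_distrib[symmetric] algebra_simps)
  finally show ?thesis by simp
qed

section \<open>Decorrelated linear combinations\<close>

definition diag_mat :: "('n::finite \<Rightarrow> real) \<Rightarrow> real^'n^'n" where
  "diag_mat d = (\<chi> i j. if i = j then d i else 0)"

lemma diag_mat_mult:
  fixes d e :: "'n::finite \<Rightarrow> real"
  shows "diag_mat d ** diag_mat e = diag_mat (\<lambda>i. d i * e i)"
proof -
  have "(\<Sum>k\<in>UNIV. (if i = k then d i else 0) * (if k = j then e k else 0))
      = (\<Sum>k\<in>UNIV. if k = i then d i * (if i = j then e i else 0) else 0)" for i j :: 'n
    by (intro sum.cong) auto
  then show ?thesis
    by (simp add: diag_mat_def matrix_matrix_mult_def vec_eq_iff)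
qed

lemma diag_mat_one: "diag_mat (\<lambda>i. 1) = mat 1"
  by (simp add: diag_mat_def mat_def)

lemma diag_mat_mult_vec [simp]: "(diag_mat d *v x) $ i = d i * x $ i"
proof -
  have "(\<Sum>j\<in>UNIV. (if i = j then d i else 0) * x $ j) = (\<Sum>j\<in>UNIV. if j = i then d i * x $ i else 0)"
    by (intro sum.cong) auto
  then show ?thesis
    by (simp add: diag_mat_def matrix_vector_mult_def)
qed

lemma matrix_inv_unique:
  fixes A :: "'a::semiring_1^'n^'n"
  assumes "A ** B = mat 1" "B ** A = mat 1"
  shows "matrix_inv A = B"
proof -
  have "\<exists>B. A ** B = mat 1 \<and> B ** A = mat 1"
    using assms by blast
  then have inv: "matrix_inv A ** A = mat 1"
    unfolding matrix_inv_def by (rule someI2_ex) simp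
  have "matrix_inv A = matrix_inv A ** (A ** B)"
    using assms(1) by simp
  also have "\<dots> = B"
    using inv by (simp add: matrix_mul_assoc)
  finally show ?thesis .
qed

lemma matrix_inv_congruent_diag:
  fixes A M :: "real^'n^'n"
  assumes "M ** A ** transpose M = diag_mat d" "\<And>i. d i \<noteq> 0"
  shows "matrix_inv A = transpose M ** diag_mat (\<lambda>i. 1 / d i) ** M"
proof -
  let ?B = "transpose M ** diag_mat (\<lambda>i. 1 / d i) ** M"
  have "M ** (A ** transpose M ** diag_mat (\<lambda>i. 1 / d i)) = mat 1"
    using assms by (simp add: matrix_mul_assoc diag_mat_mult diag_mat_one)
  then have "(A ** transpose M ** diag_mat (\<lambda>i. 1 / d i)) ** M = mat 1"
    by (simp add: matrix_left_right_inverse)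
  then have "A ** ?B = mat 1"
    by (simp add: matrix_mul_assoc)
  moreover from this have "?B ** A = mat 1"
    by (simp add: matrix_left_right_inverse)
  ultimately show ?thesis
    by (rule matrix_inv_unique)
qed

lemma pcov_lincomb:
  "pcov n (\<lambda>p. \<Sum>k\<in>UNIV. c $ k * X k p) (\<lambda>p. \<Sum>l\<in>UNIV. d $ l * X l p)
    = c \<bullet> ((\<chi> i j. pcov n (X i) (X j)) *v d)"
proof -
  have "pcov n (\<lambda>p. \<Sum>k\<in>UNIV. c $ k * X k p) (\<lambda>p. \<Sum>l\<in>UNIV. d $ l * X l p)
      = (\<Sum>k\<in>UNIV. c $ k * (\<Sum>l\<in>UNIV. d $ l * pcov n (X k) (X l)))"
    by (simp add: pcov_sum_left pcov_sum_right pcov_cmult_left pcov_cmult_right sum_distrib_left)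
  then show ?thesis
    by (simp add: inner_vec_def matrix_vector_mult_def mult.commute)
qed

lemma pvar_lincomb_pos:
  fixes X :: "'k::finite \<Rightarrow> perm_stat"
  assumes "invertible (\<chi> i j. pcov n (X i) (X j))" "c \<noteq> 0"
  shows "pvar n (\<lambda>p. \<Sum>k\<in>UNIV. c $ k * X k p) > 0"
proof (rule ccontr)
  let ?Y = "\<lambda>p. \<Sum>k\<in>UNIV. c $ k * X k p"
  assume "\<not> ?thesis"
  then have "pvar n ?Y = 0"
    using pvar_nonneg[of n ?Y] by linarith
  then have "pcov n (X l) ?Y = 0" for l
    using pcov_eq_0_if_pvar_eq_0 pcov_commute[of n "X l" ?Y] by simp
  then have "(\<chi> i j. pcov n (X i) (X j)) *v c = (\<chi> i j. pcov n (X i) (X j)) *v 0"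
    by (simp add: vec_eq_iff matrix_vector_mult_def pcov_sum_right pcov_cmult_right mult.commute)
  then have "c = 0"
    by (rule injD[OF inj_matrix_vector_mult[OF assms(1)]])
  with assms(2) show False ..
qed

lemma mahalanobis_eq_sum_zstd_sq:
  fixes X Y :: "'k::finite \<Rightarrow> perm_stat" and p :: "nat \<Rightarrow> nat"
  assumes inv: "invertible (\<chi> i j. pcov n (X i) (X j))"
    and lincomb: "\<And>r. \<exists>c. c \<noteq> 0 \<and> Y r = (\<lambda>p. \<Sum>k\<in>UNIV. c $ k * X k p)"
    and uncorr: "\<And>r s. r \<noteq> s \<Longrightarrow> pcov n (Y r) (Y s) = 0"
  defines "v \<equiv> \<chi> k. X k p - pexp n (X k)"
  shows "v \<bullet> (matrix_inv (\<chi> i j. pcov n (X i) (X j)) *v v) = (\<Sum>r\<in>UNIV. (zstd n (Y r) p)\<^sup>2)"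
proof -
  obtain C :: "real^'k^'k" where rows: "\<And>r. C $ r \<noteq> 0"
    and Y: "\<And>r. Y r = (\<lambda>p. \<Sum>k\<in>UNIV. C $ r $ k * X k p)"
  proof -
    from lincomb obtain f where "\<And>r. f r \<noteq> 0 \<and> Y r = (\<lambda>p. \<Sum>k\<in>UNIV. f r $ k * X k p)"
      by metis
    then show thesis
      by (intro that[of "\<chi> r. f r"]) simp_all
  qed
  let ?\<Sigma> = "\<chi> i j. pcov n (X i) (X j)"
  define var where "var r = pvar n (Y r)" for r
  have var_pos: "var r > 0" for r
    unfolding var_def Y using pvar_lincomb_pos[OF inv rows] .
  have "C ** ?\<Sigma> ** transpose C = diag_mat var"
  proof -
    have "(C ** ?\<Sigma> ** transpose C) $ r $ s = pcov n (Y r) (Y s)" for r s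
    proof -
      have "(C ** ?\<Sigma> ** transpose C) $ r $ s = (\<Sum>l\<in>UNIV. (\<Sum>k\<in>UNIV. C $ r $ k * ?\<Sigma> $ k $ l) * C $ s $ l)"
        by (simp add: matrix_matrix_mult_def transpose_def)
      also have "\<dots> = (\<Sum>k\<in>UNIV. C $ r $ k * (\<Sum>l\<in>UNIV. ?\<Sigma> $ k $ l * C $ s $ l))"
        unfolding sum_distrib_left sum_distrib_right by (subst sum.swap) (simp add: mult.assoc)
      also have "\<dots> = pcov n (Y r) (Y s)"
        unfolding Y pcov_lincomb by (simp add: inner_vec_def matrix_vector_mult_def)
      finally show ?thesis .
    qed
    then show ?thesis
      using uncorr by (simp add: vec_eq_iff diag_mat_def var_def pvar_def)
  qed
  then have \<Sigma>_inv: "matrix_inv ?\<Sigma> = transpose C ** diag_mat (\<lambda>r. 1 / var r) ** C"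
    using var_pos by (intro matrix_inv_congruent_diag) (simp_all add: less_imp_neq[symmetric])
  define u where "u = C *v v"
  have u: "u $ r = Y r p - pexp n (Y r)" for r
    unfolding u_def v_def Y
    by (simp add: matrix_vector_mult_def pexp_sum pexp_cmult right_diff_distrib sum_subtractf)
  have "v \<bullet> (matrix_inv ?\<Sigma> *v v) = u \<bullet> (diag_mat (\<lambda>r. 1 / var r) *v u)"
  proof -
    have "matrix_inv ?\<Sigma> *v v = transpose C *v (diag_mat (\<lambda>r. 1 / var r) *v u)"
      unfolding \<Sigma>_inv u_def by (simp only: matrix_vector_mul_assoc matrix_mul_assoc)
    then show ?thesis
      by (simp only: dot_lmul_matrix[symmetric] vector_transpose_matrix u_def)
  qed
  also have "\<dots> = (\<Sum>r\<in>UNIV. (u $ r)\<^sup>2 / var r)"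
    by (simp add: inner_vec_def power2_eq_square)
  also have "\<dots> = (\<Sum>r\<in>UNIV. (zstd n (Y r) p)\<^sup>2)"
    using var_pos by (simp add: u zstd_def var_def power_divide less_imp_le)
  finally show ?thesis .
qed

lemma pcov_diff_balanced_sum_eq_0:
  assumes "pvar n X \<noteq> pcov n X Y"
  defines "c \<equiv> (pvar n Y - pcov n X Y) / (pvar n X - pcov n X Y)"
  shows "pcov n (\<lambda>p. X p - Y p) (\<lambda>p. c * X p + Y p) = 0"
proof -
  have "pcov n (\<lambda>p. X p - Y p) (\<lambda>p. c * X p + Y p) = c * (pvar n X - pcov n X Y) - (pvar n Y - pcov n X Y)"
    by (simp add: pcov_linear pcov_commute[of n Y X] pvar_def algebra_simps)
  then show ?thesis
    using assms by simp
qed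

definition vec4 :: "real \<Rightarrow> real \<Rightarrow> real \<Rightarrow> real \<Rightarrow> real^4" where
  "vec4 a b c d = (\<chi> k. if k = 0 then a else if k = 1 then b else if k = 2 then c else d)"

lemma vec4_nth [simp]: "vec4 a b c d $ 0 = a" "vec4 a b c d $ 1 = b" "vec4 a b c d $ 2 = c" "vec4 a b c d $ 3 = d"
  by (simp_all add: vec4_def)

lemma sum_avec:
  "(\<Sum>k\<in>UNIV. c $ k * avec n K1 K2 t k p)
    = c $ 0 * alpha n K1 t p + c $ 1 * beta n K1 t p + c $ 2 * alpha n K2 t p + c $ 3 * beta n K2 t p"
proof -
  have "(4::4) = 0" by simp
  with UNIV_4 have "(UNIV :: 4 set) = {0, 1, 2, 3}" by auto
  then show ?thesis
    unfolding avec_def by (simp only: \<open>UNIV = {0, 1, 2, 3}\<close>) (simp add: add.assoc)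
qed

text \<open>The coordinate change from (alpha, beta) to (W, D) is invertible: on each kernel its
  determinant is -(wa db + wb da) < 0.\<close>

lemma lincomb_Wstat_Dstat_eq_lincomb_avec:
  assumes "2 \<le> t" "t + 2 \<le> n" "(a, b, e, d) \<noteq> (0, 0, 0, 0)"
  shows "\<exists>c. c \<noteq> 0 \<and> (\<lambda>p. a * Wstat n K1 t p + b * Wstat n K2 t p + e * Dstat n K1 t p + d * Dstat n K2 t p)
      = (\<lambda>p. \<Sum>k\<in>UNIV. c $ k * avec n K1 K2 t k p)"
proof -
  define wa wb da db where "wa = real t / real n" and "wb = (real n - real t) / real n"
    and "da = real t * (real t - 1) / (real n * (real n - 1))"
    and "db = (real n - real t) * (real n - real t - 1) / (real n * (real n - 1))"
  have pos: "wa > 0" "wb > 0" "da > 0" "db > 0"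
    using assms(1,2) by (auto simp: wa_def wb_def da_def db_def)
  have indep: "x = 0 \<and> y = 0" if "x * wa + y * da = 0" "x * wb - y * db = 0" for x y
  proof -
    have "x * (wa * db + wb * da) = db * (x * wa + y * da) + da * (x * wb - y * db)"
      by (simp add: algebra_simps)
    with that have "x * (wa * db + wb * da) = 0"
      by simp
    moreover have "wa * db + wb * da > 0"
      using pos by (metis add_pos_pos mult_pos_pos)
    ultimately have "x = 0"
      by simp
    then show ?thesis
      using that pos by simp
  qed
  let ?c = "vec4 (a * wa + e * da) (a * wb - e * db) (b * wa + d * da) (b * wb - d * db)"
  have "?c \<noteq> 0"
  proof
    assume "?c = 0"
    then have "?c $ 0 = 0" "?c $ 1 = 0" "?c $ 2 = 0" "?c $ 3 = 0"
      by simp_all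
    then show False
      using indep[of a e] indep[of b d] assms(3) by simp
  qed
  moreover have "(\<lambda>p. a * Wstat n K1 t p + b * Wstat n K2 t p + e * Dstat n K1 t p + d * Dstat n K2 t p)
      = (\<lambda>p. \<Sum>k\<in>UNIV. ?c $ k * avec n K1 K2 t k p)"
    unfolding sum_avec by (simp add: Wstat_def Dstat_def wa_def wb_def da_def db_def fun_eq_iff algebra_simps)
  ultimately show ?thesis
    by blast
qed

lemma pcov_diff_balanced_sum_pairs:
  fixes W1 W2 D1 D2 :: perm_stat
  assumes cross: "pcov n W1 D1 = 0" "pcov n W1 D2 = 0" "pcov n W2 D1 = 0" "pcov n W2 D2 = 0"
    and "pvar n W1 \<noteq> pcov n W1 W2" "pvar n D1 \<noteq> pcov n D1 D2"
  defines "c1 \<equiv> (pvar n W2 - pcov n W1 W2) / (pvar n W1 - pcov n W1 W2)"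
    and "c2 \<equiv> (pvar n D2 - pcov n D1 D2) / (pvar n D1 - pcov n D1 D2)"
  shows "pcov n (\<lambda>p. W1 p - W2 p) (\<lambda>p. D1 p - D2 p) = 0"
    and "pcov n (\<lambda>p. W1 p - W2 p) (\<lambda>p. c1 * W1 p + W2 p) = 0"
    and "pcov n (\<lambda>p. W1 p - W2 p) (\<lambda>p. c2 * D1 p + D2 p) = 0"
    and "pcov n (\<lambda>p. D1 p - D2 p) (\<lambda>p. c1 * W1 p + W2 p) = 0"
    and "pcov n (\<lambda>p. D1 p - D2 p) (\<lambda>p. c2 * D1 p + D2 p) = 0"
    and "pcov n (\<lambda>p. c1 * W1 p + W2 p) (\<lambda>p. c2 * D1 p + D2 p) = 0"
  using cross pcov_commute[of n D1 W1] pcov_commute[of n D2 W1] pcov_commute[of n D1 W2]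
    pcov_commute[of n D2 W2] pcov_diff_balanced_sum_eq_0[OF assms(5), folded c1_def]
    pcov_diff_balanced_sum_eq_0[OF assms(6), folded c2_def]
  by (simp_all add: pcov_linear)

theorem theorem1:
  fixes K1 K2 :: "nat \<Rightarrow> nat \<Rightarrow> real" and n t :: nat
    and c1 c2 :: real and WDiff DDiff WSum DSum :: perm_stat
  assumes "n \<ge> 4" and "2 \<le> t" and "t \<le> n - 2"
    and "\<forall>i\<in>{1..n}. \<forall>j\<in>{1..n}. K1 i j = K1 j i"
    and "\<forall>i\<in>{1..n}. \<forall>j\<in>{1..n}. K2 i j = K2 j i"
    and "invertible (Sigma_mat n K1 K2 t)"
    and "pvar n (Wstat n K1 t) \<noteq> pcov n (Wstat n K1 t) (Wstat n K2 t)"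
    and "pvar n (Dstat n K1 t) \<noteq> pcov n (Dstat n K1 t) (Dstat n K2 t)"
  defines "c1 \<equiv> (pvar n (Wstat n K2 t) - pcov n (Wstat n K1 t) (Wstat n K2 t))
                 / (pvar n (Wstat n K1 t) - pcov n (Wstat n K1 t) (Wstat n K2 t))"
    and "c2 \<equiv> (pvar n (Dstat n K2 t) - pcov n (Dstat n K1 t) (Dstat n K2 t))
                 / (pvar n (Dstat n K1 t) - pcov n (Dstat n K1 t) (Dstat n K2 t))"
    and "WDiff \<equiv> (\<lambda>p. Wstat n K1 t p - Wstat n K2 t p)"
    and "DDiff \<equiv> (\<lambda>p. Dstat n K1 t p - Dstat n K2 t p)"
    and "WSum \<equiv> (\<lambda>p. c1 * Wstat n K1 t p + Wstat n K2 t p)"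
    and "DSum \<equiv> (\<lambda>p. c2 * Dstat n K1 t p + Dstat n K2 t p)"
  shows "pvar n WDiff > 0 \<and> pvar n DDiff > 0 \<and> pvar n WSum > 0 \<and> pvar n DSum > 0
    \<and> pcov n (zstd n WDiff) (zstd n DDiff) = 0
    \<and> pcov n (zstd n WDiff) (zstd n WSum) = 0
    \<and> pcov n (zstd n WDiff) (zstd n DSum) = 0
    \<and> pcov n (zstd n DDiff) (zstd n WSum) = 0
    \<and> pcov n (zstd n DDiff) (zstd n DSum) = 0
    \<and> pcov n (zstd n WSum) (zstd n DSum) = 0
    \<and> (\<forall>p. p permutes {1..n} \<longrightarrow>
         Sstat n K1 K2 t p = (zstd n WDiff p)\<^sup>2 + (zstd n DDiff p)\<^sup>2
                            + (zstd n WSum p)\<^sup>2 + (zstd n DSum p)\<^sup>2)"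
proof -
  have t: "2 \<le> t" "t + 2 \<le> n"
    using assms(1-3) by auto
  note WD = pcov_Wstat_Dstat_eq_0[OF t]
  have uncorr: "pcov n WDiff DDiff = 0" "pcov n WDiff WSum = 0" "pcov n WDiff DSum = 0"
    "pcov n DDiff WSum = 0" "pcov n DDiff DSum = 0" "pcov n WSum DSum = 0"
    unfolding assms(9-14) using pcov_diff_balanced_sum_pairs[OF WD WD WD WD assms(7,8)] by simp_all
  let ?lincomb = "\<lambda>Z. \<exists>c. c \<noteq> 0 \<and> Z = (\<lambda>p. \<Sum>k\<in>UNIV. c $ k * avec n K1 K2 t k p)"
  note lincomb_WD = lincomb_Wstat_Dstat_eq_lincomb_avec[OF t]
  have stats_lincomb: "?lincomb WDiff" "?lincomb DDiff" "?lincomb WSum" "?lincomb DSum"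
    using lincomb_WD[of 1 "-1" 0 0] lincomb_WD[of 0 0 1 "-1"] lincomb_WD[of c1 1 0 0] lincomb_WD[of 0 0 c2 1]
    unfolding assms(11-14) by simp_all
  define Y :: "4 \<Rightarrow> perm_stat"
    where "Y r = (if r = 1 then WDiff else if r = 2 then DDiff else if r = 3 then WSum else DSum)" for r
  have lincomb: "\<forall>r. ?lincomb (Y r)" and Y_uncorr: "\<forall>r s. r \<noteq> s \<longrightarrow> pcov n (Y r) (Y s) = 0"
    unfolding forall_4 Y_def using stats_lincomb uncorr pcov_commute[of n] by simp_all
  have inv: "invertible (\<chi> i j. pcov n (avec n K1 K2 t i) (avec n K1 K2 t j))"
    using assms(6) unfolding Sigma_mat_def .
  have "\<forall>r. pvar n (Y r) > 0"
    using lincomb pvar_lincomb_pos[OF inv] by metis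
  moreover have "Sstat n K1 K2 t p = (\<Sum>r\<in>UNIV. (zstd n (Y r) p)\<^sup>2)" for p
    unfolding Sstat_def Sigma_mat_def Let_def
    by (rule mahalanobis_eq_sum_zstd_sq[OF inv lincomb[rule_format] Y_uncorr[rule_format]])
  ultimately show ?thesis
    using uncorr unfolding forall_4 by (simp add: Y_def sum_4 pcov_zstd add.assoc)
qed

end
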